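(* Let $X$ be a real separable Hilbert space and $F:X\to X$ monotone and hemicontinuous; let $x^\dagger\in X$ solve $F(x)=y$ and let $\bar x\in X$. Assume: (i) there is $r>\|x^\dagger-\bar x\|$ such that $F$ is Fréchet differentiable on the ball $\mathcal B_r(x^\dagger)$ with derivatives $F'(x)\in\mathcal L(X)$, and $x\mapsto F'(x)$ is continuous at every $x\in\mathcal B_r(x^\dagger)$; (ii) there is $k_0>0$ such that for all $\tilde x,x\in\mathcal B_r(x^\dagger)$ and $v\in X$ there exists $g(\tilde x,x,v)\in X$ with $$(F'(\tilde x)-F'(x))v=F'(x)\,g(\tilde x,x,v),\qquad \|g(\tilde x,x,v)\|\le k_0\|\tilde x-x\|\|v\|;$$ (iii) $k_0\|x^\dagger-\bar x\|<2$. Let $A:=F'(x^\dagger)$, for $\alpha>0$ let $x_\alpha$ solve $F(x_\alpha)+\alpha(x_\alpha-\bar x)=y$, and let $B^F_{x^\dagger}(\alpha):=\|x_\alpha-x^\dagger\|$ and $B^A_{x^\dagger}(\alpha):=\alpha\|(A+\alpha I)^{-1}(x^\dagger-\bar x)\|$. Then for all $\alpha>0$: $B^F_{x^\dagger}(\alpha)\le\|x^\dagger-\bar x\|$ (so $x_\alpha\in\mathcal B_r(x^\dagger)$), $$B^F_{x^\dagger}(\alpha)\le \frac{2+2k_0\|x^\dagger-\bar x\|}{2-k_0\|x^\dagger-\bar x\|}\,B^A_{x^\dagger}(\alpha),$$ and for every $\delta\ge0$ and $y^\delta$ with $\|y-y^\delta\|\le\delta$, the solution $x^\delta_\alpha$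 of $F(x^\delta_\alpha)+\alpha(x^\delta_\alpha-\bar x)=y^\delta$ satisfies $$\|x^\delta_\alpha-x^\dagger\|\le \frac{2+2k_0\|x^\dagger-\bar x\|}{2-k_0\|x^\dagger-\bar x\|}\,B^A_{x^\dagger}(\alpha)+\frac\delta\alpha.$$
   Context: Monotone: $\langle F(x)-F(\tilde x),x-\tilde x\rangle\ge0$ for all $x,\tilde x$; hemicontinuous: $t\mapsto\langle F(x+tv),z\rangle$ continuous on $[0,1]$. $\mathcal B_r(x^\dagger)$ is the closed ball of radius $r$ around $x^\dagger$; $\mathcal L(X)$ the bounded linear operators on $X$. The Fréchet derivatives of a monotone operator are monotone, so $A+\alpha I$ is boundedly invertible. *)

theory Defs
  imports "HOL-Analysis.Analysis"
begin

definition monotone_op :: "('a::real_inner \<Rightarrow> 'a) \<Rightarrow> bool" where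
  "monotone_op F \<longleftrightarrow> (\<forall>x x'. inner (F x - F x') (x - x') \<ge> 0)"

definition hemicontinuous :: "('a::real_inner \<Rightarrow> 'a) \<Rightarrow> bool" where
  "hemicontinuous F \<longleftrightarrow>
     (\<forall>x v z. continuous_on {0..1} (\<lambda>t::real. inner (F (x + t *\<^sub>R v)) z))"

end

theory Submission
  imports Defs
begin

text \<open>Monotonicity makes \<open>F + \<alpha> I\<close> strongly monotone with constant \<open>\<alpha>\<close>; this alone gives
\<open>\<parallel>xa - xdag\<parallel> \<le> \<parallel>xdag - xbar\<parallel>\<close> and the data-error term \<open>\<delta> / \<alpha>\<close>. For the bias write
\<open>e = xa - xdag\<close> and \<open>A = F' xdag\<close>, so that \<open>(A + \<alpha> I) e = -\<alpha> (xdag - xbar) - (F xa - F xdag - A e)\<close>.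
Since \<open>A\<close> is monotone, \<open>A + \<alpha> I\<close> is boundedly invertible (a contraction argument gives
surjectivity) and \<open>(A + \<alpha> I)\<^sup>-\<^sup>1 A\<close> is a contraction. Together with the tangential cone condition
along the segment from \<open>xdag\<close> to \<open>xa\<close>, this bounds the transformed Taylor remainder by
\<open>k\<^sub>0 \<parallel>e\<parallel>\<^sup>2 / 2 \<le> (k\<^sub>0 \<parallel>xdag - xbar\<parallel> / 2) \<parallel>e\<parallel>\<close>, which is absorbed into the left-hand side.\<close>

lemma monotone_op_plus_scaleR_lower_bound:
  fixes F :: "'a::real_inner \<Rightarrow> 'a"
  assumes "monotone_op F" "\<alpha> \<ge> 0"
  shows "\<alpha> * norm (u - v) \<le> norm ((F u + \<alpha> *\<^sub>R u) - (F v + \<alpha> *\<^sub>R v))"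
proof -
  let ?d = "u - v" and ?b = "(F u + \<alpha> *\<^sub>R u) - (F v + \<alpha> *\<^sub>R v)"
  have "0 \<le> inner (F u - F v) ?d"
    using assms(1) unfolding monotone_op_def by blast
  then have "\<alpha> * (norm ?d)\<^sup>2 \<le> inner ?b ?d"
    by (simp add: inner_diff_left inner_add_left power2_norm_eq_inner algebra_simps)
  also have "\<dots> \<le> norm ?b * norm ?d"
    by (rule norm_cauchy_schwarz)
  finally have "\<alpha> * norm ?d * norm ?d \<le> norm ?b * norm ?d"
    by (simp add: power2_eq_square mult.assoc)
  then show ?thesis
    by (cases "norm ?d = 0") (auto simp: assms(2))
qed

lemma monotone_op_blinfun:
  fixes A :: "'a::real_inner \<Rightarrow>\<^sub>L 'a"
  assumes "\<And>v. 0 \<le> inner (A v) v"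
  shows "monotone_op (blinfun_apply A)"
  using assms unfolding monotone_op_def by (metis blinfun.diff_right)

lemma blinfun_plus_scaleR_lower_bound:
  fixes A :: "'a::real_inner \<Rightarrow>\<^sub>L 'a"
  assumes "\<And>v. 0 \<le> inner (A v) v" "\<alpha> \<ge> 0"
  shows "\<alpha> * norm u \<le> norm (A u + \<alpha> *\<^sub>R u)"
  using monotone_op_plus_scaleR_lower_bound[OF monotone_op_blinfun[OF assms(1)] assms(2), of u 0]
  by simp

lemma norm_diff_scaleR_squared:
  fixes d b :: "'a::real_inner"
  shows "(norm (d - t *\<^sub>R b))\<^sup>2 = (norm d)\<^sup>2 - 2 * t * inner b d + t\<^sup>2 * (norm b)\<^sup>2"
  unfolding power2_norm_eq_inner
  by (simp add: inner_diff_left inner_diff_right inner_commute algebra_simps power2_eq_square)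

text \<open>One step of the damped Richardson iteration for \<open>A + \<alpha> I\<close> contracts: expand the square
and use \<open>\<langle>A d + \<alpha> d, d\<rangle> \<ge> \<alpha> \<parallel>d\<parallel>\<^sup>2\<close> and \<open>\<parallel>A d + \<alpha> d\<parallel> \<le> K \<parallel>d\<parallel>\<close>.\<close>

lemma norm_richardson_step_le:
  fixes A :: "'a::real_inner \<Rightarrow>\<^sub>L 'a"
  assumes mon: "\<And>v. 0 \<le> inner (A v) v" and \<alpha>: "\<alpha> > 0"
  defines "K \<equiv> norm A + \<alpha>"
  shows "norm (d - (\<alpha> / K\<^sup>2) *\<^sub>R (A d + \<alpha> *\<^sub>R d)) \<le> (1 - \<alpha>\<^sup>2 / (2 * K\<^sup>2)) * norm d"
proof -
  define \<tau> where "\<tau> = \<alpha> / K\<^sup>2"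
  define x where "x = \<alpha>\<^sup>2 / K\<^sup>2"
  define b where "b = A d + \<alpha> *\<^sub>R d"
  have K: "K > 0" "\<alpha> \<le> K"
    using \<alpha> norm_ge_zero[of A] unfolding K_def by linarith+
  then have x: "0 < x" "x \<le> 1"
    using \<alpha> by (auto simp: x_def field_simps power_mono)
  have \<tau>: "\<tau> > 0"
    using \<alpha> K by (simp add: \<tau>_def)
  have "norm b \<le> norm A * norm d + \<alpha> * norm d"
    using norm_triangle_ineq[of "A d" "\<alpha> *\<^sub>R d"] norm_blinfun[of A d] \<alpha> by (simp add: b_def)
  then have "(norm b)\<^sup>2 \<le> (K * norm d)\<^sup>2"
    by (simp add: K_def algebra_simps power_mono)
  then have "\<tau>\<^sup>2 * (norm b)\<^sup>2 \<le> \<tau>\<^sup>2 * (K * norm d)\<^sup>2"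
    by (simp add: mult_left_mono)
  moreover have "2 * \<tau> * (\<alpha> * (norm d)\<^sup>2) \<le> 2 * \<tau> * inner b d"
    using mon[of d] \<tau> by (simp add: b_def inner_add_left power2_norm_eq_inner)
  ultimately have "(norm (d - \<tau> *\<^sub>R b))\<^sup>2 \<le> (norm d)\<^sup>2 - 2 * \<tau> * (\<alpha> * (norm d)\<^sup>2) + \<tau>\<^sup>2 * (K * norm d)\<^sup>2"
    unfolding norm_diff_scaleR_squared by linarith
  also have "\<dots> = (1 - x) * (norm d)\<^sup>2"
    using K by (simp add: \<tau>_def x_def field_simps power2_eq_square)
  also have "\<dots> \<le> ((1 - x / 2) * norm d)\<^sup>2"
  proof -
    have "1 - x \<le> (1 - x / 2)\<^sup>2"
      by (simp add: power2_eq_square field_simps)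
    then show ?thesis
      by (simp add: power_mult_distrib mult_right_mono)
  qed
  finally have "norm (d - \<tau> *\<^sub>R b) \<le> (1 - x / 2) * norm d"
    by (rule power2_le_imp_le) (use x in simp)
  then show ?thesis
    by (simp add: \<tau>_def b_def x_def mult.commute)
qed

lemma blinfun_plus_scaleR_surj:
  fixes A :: "'a::{real_inner,complete_space} \<Rightarrow>\<^sub>L 'a"
  assumes mon: "\<And>v. 0 \<le> inner (A v) v" and \<alpha>: "\<alpha> > 0"
  shows "\<exists>u. A u + \<alpha> *\<^sub>R u = z"
proof -
  define K where "K = norm A + \<alpha>"
  define \<tau> where "\<tau> = \<alpha> / K\<^sup>2"
  define c where "c = 1 - \<alpha>\<^sup>2 / (2 * K\<^sup>2)"
  have K: "K > 0" "\<alpha> \<le> K"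
    using \<alpha> norm_ge_zero[of A] unfolding K_def by linarith+
  then have "\<alpha>\<^sup>2 / (2 * K\<^sup>2) \<le> K\<^sup>2 / (2 * K\<^sup>2)"
    using \<alpha> by (intro divide_right_mono power_mono) simp_all
  also have "\<dots> = 1 / 2"
    using K by simp
  finally have "\<alpha>\<^sup>2 / (2 * K\<^sup>2) \<le> 1 / 2" .
  moreover have "0 < \<alpha>\<^sup>2 / (2 * K\<^sup>2)"
    using \<alpha> K by simp
  ultimately have c: "0 \<le> c" "c < 1"
    unfolding c_def by linarith+
  define f where "f u = u - \<tau> *\<^sub>R (A u + \<alpha> *\<^sub>R u - z)" for u
  have "f u - f v = (u - v) - \<tau> *\<^sub>R (A (u - v) + \<alpha> *\<^sub>R (u - v))" for u v
    by (simp add: f_def blinfun.diff_right algebra_simps)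
  then have "dist (f u) (f v) \<le> c * dist u v" for u v
    using norm_richardson_step_le[OF mon \<alpha>, of "u - v"]
    by (simp add: dist_norm \<tau>_def c_def K_def)
  then obtain u where "f u = u"
    using banach_fix_type[OF c] by blast
  moreover have "\<tau> \<noteq> 0"
    using \<alpha> K by (simp add: \<tau>_def)
  ultimately show ?thesis
    by (auto simp: f_def)
qed

lemma bij_blinfun_plus_scaleR:
  fixes A :: "'a::{real_inner,complete_space} \<Rightarrow>\<^sub>L 'a"
  assumes "\<And>v. 0 \<le> inner (A v) v" "\<alpha> > 0"
  shows "bij (\<lambda>u. A u + \<alpha> *\<^sub>R u)"
proof (rule bijI)
  show "inj (\<lambda>u. A u + \<alpha> *\<^sub>R u)"
  proof (rule injI)
    fix u v assume "A u + \<alpha> *\<^sub>R u = A v + \<alpha> *\<^sub>R v"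
    then have "A (u - v) + \<alpha> *\<^sub>R (u - v) = 0"
      by (simp add: blinfun.diff_right algebra_simps)
    then show "u = v"
      using blinfun_plus_scaleR_lower_bound[OF assms(1), of \<alpha> "u - v"] assms(2)
      by (simp add: mult_le_0_iff)
  qed
  show "surj (\<lambda>u. A u + \<alpha> *\<^sub>R u)"
  proof (rule surjI)
    show "A (SOME u. A u + \<alpha> *\<^sub>R u = z) + \<alpha> *\<^sub>R (SOME u. A u + \<alpha> *\<^sub>R u = z) = z" for z
      using blinfun_plus_scaleR_surj[OF assms, of z] by (rule someI_ex)
  qed
qed

lemma bounded_linear_inv_blinfun_plus_scaleR:
  fixes A :: "'a::{real_inner,complete_space} \<Rightarrow>\<^sub>L 'a"
  assumes "\<And>v. 0 \<le> inner (A v) v" "\<alpha> > 0"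
  shows "bounded_linear (inv (\<lambda>u. A u + \<alpha> *\<^sub>R u))"
proof -
  define B where "B = (\<lambda>u. A u + \<alpha> *\<^sub>R u)"
  have bij: "bij B"
    unfolding B_def by (rule bij_blinfun_plus_scaleR[OF assms])
  have B_inv: "B (inv B z) = z" and inv_B: "inv B (B u) = u" for z u
    using bij by (simp_all add: bij_is_surj surj_f_inv_f bij_is_inj)
  have B_add: "B (u + v) = B u + B v" and B_scale: "B (c *\<^sub>R u) = c *\<^sub>R B u" for u v c
    by (simp_all add: B_def blinfun.add_right blinfun.scaleR_right algebra_simps)
  have "bounded_linear (inv B)"
  proof (rule bounded_linear_intro[where K = "1 / \<alpha>"])
    show "inv B (x + y) = inv B x + inv B y" for x y
      using inv_B[of "inv B x + inv B y"] by (simp only: B_add B_inv)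
    show "inv B (c *\<^sub>R x) = c *\<^sub>R inv B x" for c x
      using inv_B[of "c *\<^sub>R inv B x"] by (simp only: B_scale B_inv)
    show "norm (inv B x) \<le> norm x * (1 / \<alpha>)" for x
    proof -
      have "\<alpha> * norm (inv B x) \<le> norm (B (inv B x))"
        unfolding B_def by (rule blinfun_plus_scaleR_lower_bound[OF assms(1)]) (use assms(2) in simp)
      then show ?thesis
        using assms(2) by (simp add: B_inv field_simps)
    qed
  qed
  then show ?thesis
    by (simp add: B_def)
qed

text \<open>\<open>A\<close> commutes with \<open>A + \<alpha> I\<close>, and \<open>\<parallel>A u\<parallel> \<le> \<parallel>A u + \<alpha> u\<parallel>\<close> since the cross term
\<open>2 \<alpha> \<langle>A u, u\<rangle>\<close> is nonnegative.\<close>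

lemma norm_inv_blinfun_plus_scaleR_blinfun_le:
  fixes A :: "'a::{real_inner,complete_space} \<Rightarrow>\<^sub>L 'a"
  assumes mon: "\<And>v. 0 \<le> inner (A v) v" and \<alpha>: "\<alpha> > 0"
  shows "norm (inv (\<lambda>u. A u + \<alpha> *\<^sub>R u) (A g)) \<le> norm g"
proof -
  define B where "B = (\<lambda>u. A u + \<alpha> *\<^sub>R u)"
  have bij: "bij B"
    unfolding B_def by (rule bij_blinfun_plus_scaleR[OF mon \<alpha>])
  have B_inv: "B (inv B z) = z" and inv_B: "inv B (B u) = u" for z u
    using bij by (simp_all add: bij_is_surj surj_f_inv_f bij_is_inj)
  define u where "u = inv B g"
  have "B (A u) = A (B u)"
    by (simp add: B_def blinfun.add_right blinfun.scaleR_right)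
  then have Ag: "inv B (A g) = A u"
    using inv_B[of "A u"] by (simp only: u_def B_inv)
  have "(norm (B u))\<^sup>2 = (norm (A u))\<^sup>2 + 2 * \<alpha> * inner (A u) u + \<alpha>\<^sup>2 * (norm u)\<^sup>2"
    unfolding B_def power2_norm_eq_inner
    by (simp add: inner_add_left inner_add_right inner_commute algebra_simps power2_eq_square)
  moreover have "0 \<le> 2 * \<alpha> * inner (A u) u"
    using mon[of u] \<alpha> by simp
  moreover have "0 \<le> \<alpha>\<^sup>2 * (norm u)\<^sup>2"
    by simp
  ultimately have "(norm (A u))\<^sup>2 \<le> (norm (B u))\<^sup>2"
    by linarith
  then have "norm (A u) \<le> norm (B u)"
    by (rule power2_le_imp_le) simp
  then have "norm (inv B (A g)) \<le> norm g"
    by (simp only: Ag u_def B_inv)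
  then show ?thesis
    by (simp only: B_def)
qed

lemma increment_le_of_derivative_le_linear:
  fixes \<phi> \<phi>' :: "real \<Rightarrow> real"
  assumes "\<And>t. t \<in> {0..1} \<Longrightarrow> (\<phi> has_real_derivative \<phi>' t) (at t)"
    and "\<And>t. t \<in> {0..1} \<Longrightarrow> \<phi>' t \<le> c * t"
  shows "\<phi> 1 - \<phi> 0 \<le> c / 2"
proof -
  define \<psi> where "\<psi> t = \<phi> t - c * t\<^sup>2 / 2" for t
  have "\<psi> 1 \<le> \<psi> 0"
  proof (rule DERIV_nonpos_imp_nonincreasing[of 0 1])
    fix t :: real assume "0 \<le> t" "t \<le> 1"
    then have "(\<psi> has_real_derivative \<phi>' t - c * t) (at t)" "\<phi>' t - c * t \<le> 0"
      using assms unfolding \<psi>_def by (auto intro!: derivative_eq_intros)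
    then show "\<exists>y. (\<psi> has_real_derivative y) (at t) \<and> y \<le> 0"
      by blast
  qed simp
  then show ?thesis
    by (simp add: \<psi>_def)
qed

lemma has_derivative_along_line:
  fixes F :: "'a::real_normed_vector \<Rightarrow> 'b::real_normed_vector"
  assumes "(F has_derivative blinfun_apply L) (at (x + t *\<^sub>R v))"
  shows "((\<lambda>s. F (x + s *\<^sub>R v)) has_derivative (\<lambda>s. s *\<^sub>R L v)) (at t)"
proof -
  have "((\<lambda>s. x + s *\<^sub>R v) has_derivative (\<lambda>s. s *\<^sub>R v)) (at t)"
    by (auto intro!: derivative_eq_intros)
  from diff_chain_at[OF this assms] show ?thesis
    by (simp add: o_def blinfun.scaleR_right)
qed

lemma has_real_derivative_inner_along_line:
  fixes F :: "'a::real_normed_vector \<Rightarrow> 'b::real_normed_vector" and q :: "'c::real_inner"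
  assumes R: "bounded_linear R"
    and "(F has_derivative blinfun_apply L) (at (x + t *\<^sub>R v))"
  shows "((\<lambda>s. inner (R (F (x + s *\<^sub>R v))) q) has_real_derivative inner (R (L v)) q) (at t)"
proof -
  have "((\<lambda>s. R (F (x + s *\<^sub>R v))) has_derivative (\<lambda>s. R (s *\<^sub>R L v))) (at t)"
    by (rule bounded_linear.has_derivative[OF R has_derivative_along_line[OF assms(2)]])
  then have "((\<lambda>s. inner (R (F (x + s *\<^sub>R v))) q) has_derivative (\<lambda>s. inner (R (s *\<^sub>R L v)) q)) (at t)"
    by (rule has_derivative_inner_left)
  then show ?thesis
    by (rule has_derivative_imp_has_field_derivative)
      (simp add: linear_simps[OF R])
qed

lemma has_derivative_monotone_op_nonneg:
  fixes F :: "'a::real_inner \<Rightarrow> 'a"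
  assumes mono: "monotone_op F" and "(F has_derivative blinfun_apply L) (at x)"
  shows "0 \<le> inner (L v) v"
proof -
  define g where "g s = inner (F (x + s *\<^sub>R v)) v" for s
  have "(g has_real_derivative inner (L v) v) (at 0)"
    unfolding g_def
    by (rule has_real_derivative_inner_along_line[OF bounded_linear_ident]) (use assms(2) in simp)
  then have lim: "((\<lambda>s. (g s - g 0) / (s - 0)) \<longlongrightarrow> inner (L v) v) (at_right 0)"
    unfolding has_field_derivative_iff by (rule tendsto_mono[OF at_le, rotated]) simp
  have "\<forall>\<^sub>F s in at_right 0. 0 \<le> (g s - g 0) / (s - 0)"
  proof (rule eventually_at_rightI[where b = 1])
    fix s :: real assume s: "s \<in> {0<..<1}"
    have "0 \<le> inner (F (x + s *\<^sub>R v) - F x) ((x + s *\<^sub>R v) - x)"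
      using mono unfolding monotone_op_def by blast
    then have "0 \<le> s * (g s - g 0)"
      by (simp add: g_def inner_diff_left)
    then show "0 \<le> (g s - g 0) / (s - 0)"
      using s by (simp add: zero_le_mult_iff)
  qed simp
  then show ?thesis
    by (rule tendsto_lowerbound[OF lim]) simp
qed

text \<open>With \<open>q\<close> the transformed remainder, the function
\<open>t \<mapsto> \<langle>R (F (x + t e)) - t R (F' x e), q\<rangle>\<close> increases by \<open>\<parallel>q\<parallel>\<^sup>2\<close> on \<open>[0, 1]\<close>, and by the
tangential cone condition its derivative is \<open>\<langle>R (F' x g), q\<rangle> \<le> t k \<parallel>e\<parallel>\<^sup>2 \<parallel>q\<parallel>\<close>.\<close>

lemma tangential_cone_remainder_bound:
  fixes F :: "'a::real_normed_vector \<Rightarrow> 'b::real_normed_vector" and F' :: "'a \<Rightarrow> 'a \<Rightarrow>\<^sub>L 'b"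
    and R :: "'b \<Rightarrow> 'c::real_inner"
  assumes k: "k \<ge> 0" and R: "bounded_linear R"
    and R_contr: "\<And>g. norm (R (F' x g)) \<le> norm g"
    and deriv: "\<And>t. t \<in> {0..1} \<Longrightarrow>
                  (F has_derivative blinfun_apply (F' (x + t *\<^sub>R e))) (at (x + t *\<^sub>R e))"
    and tc: "\<And>t. t \<in> {0..1} \<Longrightarrow>
               \<exists>g. (F' (x + t *\<^sub>R e) - F' x) e = F' x g \<and> norm g \<le> k * norm (x + t *\<^sub>R e - x) * norm e"
  shows "norm (R (F (x + e) - F x - F' x e)) \<le> k * (norm e)\<^sup>2 / 2"
proof -
  note R_simps = linear_simps[OF R]
  define q where "q = R (F (x + e) - F x - F' x e)"
  define \<phi> where "\<phi> t = inner (R (F (x + t *\<^sub>R e))) q - t * inner (R (F' x e)) q" for t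
  define \<phi>' where "\<phi>' t = inner (R (F' (x + t *\<^sub>R e) e)) q - inner (R (F' x e)) q" for t
  have "\<phi> 1 - \<phi> 0 \<le> k * (norm e)\<^sup>2 * norm q / 2"
  proof (rule increment_le_of_derivative_le_linear)
    fix t :: real assume t: "t \<in> {0..1}"
    show "(\<phi> has_real_derivative \<phi>' t) (at t)"
      unfolding \<phi>_def \<phi>'_def
      by (auto intro!: derivative_eq_intros has_real_derivative_inner_along_line[OF R deriv[OF t]])
    obtain g where g: "(F' (x + t *\<^sub>R e) - F' x) e = F' x g"
      "norm g \<le> k * norm (x + t *\<^sub>R e - x) * norm e"
      using tc[OF t] by blast
    have "\<phi>' t = inner (R (F' x g)) q"
      by (simp add: \<phi>'_def g(1)[symmetric] blinfun.diff_left R_simps inner_diff_left)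
    also have "\<dots> \<le> norm g * norm q"
      using norm_cauchy_schwarz[of "R (F' x g)" q] R_contr[of g] by (simp add: mult_right_mono order_trans)
    also have "\<dots> \<le> k * (norm e)\<^sup>2 * t * norm q"
      using g(2) t by (intro mult_right_mono) (auto simp: power2_eq_square algebra_simps)
    finally show "\<phi>' t \<le> k * (norm e)\<^sup>2 * norm q * t"
      by (simp add: algebra_simps)
  qed
  moreover have "\<phi> 1 - \<phi> 0 = (norm q)\<^sup>2"
    by (simp add: \<phi>_def q_def R_simps inner_diff_left power2_norm_eq_inner)
  ultimately have "norm q * norm q \<le> (k * (norm e)\<^sup>2 / 2) * norm q"
    by (simp add: power2_eq_square)
  then show ?thesis
    unfolding q_def[symmetric] using k by (cases "norm q = 0") auto
qed

lemma tikhonov_solution_dist_le: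
  fixes F :: "'a::real_inner \<Rightarrow> 'a"
  assumes "monotone_op F" "\<alpha> > 0"
    and "F u + \<alpha> *\<^sub>R (u - z) = f" "F v + \<alpha> *\<^sub>R (v - z) = g"
  shows "norm (u - v) \<le> norm (f - g) / \<alpha>"
proof -
  have "(F u + \<alpha> *\<^sub>R u) - (F v + \<alpha> *\<^sub>R v) = f - g"
    using assms(3,4) by (auto simp: algebra_simps)
  then have "\<alpha> * norm (u - v) \<le> norm (f - g)"
    using monotone_op_plus_scaleR_lower_bound[OF assms(1), of \<alpha> u v] assms(2) by simp
  then show ?thesis
    using assms(2) by (simp add: field_simps)
qed

lemma tikhonov_error_eq:
  fixes A :: "'a::{real_inner,complete_space} \<Rightarrow>\<^sub>L 'a" and F :: "'a \<Rightarrow> 'a"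
  assumes mon: "\<And>v. 0 \<le> inner (A v) v" and \<alpha>: "\<alpha> > 0"
    and eq: "F xa + \<alpha> *\<^sub>R (xa - xbar) = F xdag"
  defines "R \<equiv> inv (\<lambda>u. A u + \<alpha> *\<^sub>R u)"
  shows "xa - xdag = - \<alpha> *\<^sub>R R (xdag - xbar) - R (F xa - F xdag - A (xa - xdag))"
proof -
  let ?e = "xa - xdag"
  have "A ?e + \<alpha> *\<^sub>R ?e = - \<alpha> *\<^sub>R (xdag - xbar) - (F xa - F xdag - A ?e)"
    using eq by (simp add: algebra_simps)
  moreover have "R (A ?e + \<alpha> *\<^sub>R ?e) = ?e"
    unfolding R_def by (rule inv_f_f[OF bij_is_inj[OF bij_blinfun_plus_scaleR[OF mon \<alpha>]]])
  moreover have "bounded_linear R"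
    unfolding R_def by (rule bounded_linear_inv_blinfun_plus_scaleR[OF mon \<alpha>])
  ultimately show ?thesis
    by (metis linear_simps(2,4,5)[of R])
qed

lemma tikhonov_bias_bound:
  fixes F :: "'a::{real_inner,complete_space} \<Rightarrow> 'a" and F' :: "'a \<Rightarrow> 'a \<Rightarrow>\<^sub>L 'a"
  assumes mono: "monotone_op F" and \<alpha>: "\<alpha> > 0" and k0: "k0 \<ge> 0"
    and eq: "F xa + \<alpha> *\<^sub>R (xa - xbar) = F xdag"
    and r: "norm (xdag - xbar) \<le> r"
    and deriv: "\<And>x. x \<in> cball xdag r \<Longrightarrow> (F has_derivative blinfun_apply (F' x)) (at x)"
    and tc: "\<And>xt x v. xt \<in> cball xdag r \<Longrightarrow> x \<in> cball xdag r \<Longrightarrow>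
               \<exists>g. (F' xt - F' x) v = F' x g \<and> norm g \<le> k0 * norm (xt - x) * norm v"
  shows "norm (xa - xdag) * (2 - k0 * norm (xdag - xbar))
           \<le> 2 * (\<alpha> * norm (inv (\<lambda>u. F' xdag u + \<alpha> *\<^sub>R u) (xdag - xbar)))"
proof -
  define A where "A = F' xdag"
  define R where "R = inv (\<lambda>u. A u + \<alpha> *\<^sub>R u)"
  define e where "e = xa - xdag"
  define w where "w = xdag - xbar"
  have xdag_in: "xdag \<in> cball xdag r"
    using order_trans[OF norm_ge_zero r] by simp
  have monA: "0 \<le> inner (A v) v" for v
    unfolding A_def by (rule has_derivative_monotone_op_nonneg[OF mono deriv[OF xdag_in]])
  have "F xdag + \<alpha> *\<^sub>R (xdag - xbar) = F xdag + \<alpha> *\<^sub>R w"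
    by (simp add: w_def)
  from tikhonov_solution_dist_le[OF mono \<alpha> eq this]
  have e_le_w: "norm e \<le> norm w"
    using \<alpha> by (simp add: e_def)
  have segment: "xdag + t *\<^sub>R e \<in> cball xdag r" if "t \<in> {0..1}" for t
    using that e_le_w r mult_left_le_one_le[of "norm e" t] by (simp add: dist_norm w_def)
  have "norm (R (F (xdag + e) - F xdag - A e)) \<le> k0 * (norm e)\<^sup>2 / 2"
    unfolding A_def
  proof (rule tangential_cone_remainder_bound[OF k0])
    show "bounded_linear R"
      unfolding R_def by (rule bounded_linear_inv_blinfun_plus_scaleR[OF monA \<alpha>])
    show "norm (R (F' xdag g)) \<le> norm g" for g
      unfolding R_def A_def by (rule norm_inv_blinfun_plus_scaleR_blinfun_le[OF monA[unfolded A_def] \<alpha>])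
  qed (use segment xdag_in in \<open>blast intro: deriv tc\<close>)+
  moreover have "e = - \<alpha> *\<^sub>R R w - R (F (xdag + e) - F xdag - A e)"
    using tikhonov_error_eq[OF monA \<alpha> eq] by (simp add: R_def e_def w_def)
  ultimately have "norm e \<le> \<alpha> * norm (R w) + k0 * (norm e)\<^sup>2 / 2"
    using norm_triangle_ineq4[of "- \<alpha> *\<^sub>R R w"] \<alpha> by (smt (verit) norm_minus_cancel norm_scaleR)
  also have "\<dots> \<le> \<alpha> * norm (R w) + k0 * norm w * norm e / 2"
    using e_le_w k0 by (simp add: power2_eq_square mult.assoc mult_left_mono mult_right_mono)
  finally show ?thesis
    by (simp add: A_def R_def e_def w_def algebra_simps)
qed

lemma tikhonov_error_estimates:
  fixes F :: "'a::{real_inner,complete_space} \<Rightarrow> 'a" and F' :: "'a \<Rightarrow> 'a \<Rightarrow>\<^sub>L 'a"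
  assumes mono: "monotone_op F" and \<alpha>: "\<alpha> > 0" and k0: "k0 \<ge> 0"
    and eq: "F xa + \<alpha> *\<^sub>R (xa - xbar) = F xdag"
    and r: "norm (xdag - xbar) \<le> r"
    and deriv: "\<And>x. x \<in> cball xdag r \<Longrightarrow> (F has_derivative blinfun_apply (F' x)) (at x)"
    and tc: "\<And>xt x v. xt \<in> cball xdag r \<Longrightarrow> x \<in> cball xdag r \<Longrightarrow>
               \<exists>g. (F' xt - F' x) v = F' x g \<and> norm g \<le> k0 * norm (xt - x) * norm v"
    and small: "k0 * norm (xdag - xbar) < 2"
  defines "BA \<equiv> \<alpha> * norm (inv (\<lambda>u. F' xdag u + \<alpha> *\<^sub>R u) (xdag - xbar))"
    and "C \<equiv> (2 + 2 * k0 * norm (xdag - xbar)) / (2 - k0 * norm (xdag - xbar))"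
  shows "norm (xa - xdag) \<le> norm (xdag - xbar)"
    and "norm (xa - xdag) \<le> C * BA"
    and "norm (F xdag - yd) \<le> \<delta> \<Longrightarrow> F xd + \<alpha> *\<^sub>R (xd - xbar) = yd \<Longrightarrow>
           norm (xd - xdag) \<le> C * BA + \<delta> / \<alpha>"
proof -
  define s where "s = norm (xdag - xbar)"
  have "F xdag + \<alpha> *\<^sub>R (xdag - xbar) = F xdag + \<alpha> *\<^sub>R (xdag - xbar)" ..
  from tikhonov_solution_dist_le[OF mono \<alpha> eq this]
  show "norm (xa - xdag) \<le> norm (xdag - xbar)"
    using \<alpha> by simp
  have "norm (xa - xdag) * (2 - k0 * s) \<le> 2 * BA"
    unfolding s_def BA_def by (rule tikhonov_bias_bound[OF mono \<alpha> k0 eq r deriv tc])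
  then have "norm (xa - xdag) \<le> 2 * BA / (2 - k0 * s)"
    using small by (simp add: s_def field_simps)
  also have "\<dots> \<le> C * BA"
  proof -
    have "2 * BA \<le> (2 + 2 * k0 * s) * BA"
      using k0 \<alpha> by (intro mult_right_mono) (simp_all add: s_def BA_def)
    then show ?thesis
      using small by (simp add: C_def s_def divide_right_mono)
  qed
  finally show bias: "norm (xa - xdag) \<le> C * BA" .
  assume "norm (F xdag - yd) \<le> \<delta>" and eq_d: "F xd + \<alpha> *\<^sub>R (xd - xbar) = yd"
  have "norm (xd - xa) \<le> norm (yd - F xdag) / \<alpha>"
    by (rule tikhonov_solution_dist_le[OF mono \<alpha> eq_d eq])
  also have "\<dots> \<le> \<delta> / \<alpha>"
    using \<open>norm (F xdag - yd) \<le> \<delta>\<close> \<alpha> by (simp add: norm_minus_commute divide_right_mono)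
  finally show "norm (xd - xdag) \<le> C * BA + \<delta> / \<alpha>"
    using bias norm_triangle_ineq[of "xd - xa" "xa - xdag"] by simp
qed

theorem proposition5p1:
  fixes F :: "'a::{real_inner,complete_space} \<Rightarrow> 'a"
    and F' :: "'a \<Rightarrow> 'a \<Rightarrow>\<^sub>L 'a"
    and y xdag xbar :: 'a and r k0 :: real
  assumes sep: "separable_space (euclidean :: 'a topology)"
    and mono: "monotone_op F"
    and hemi: "hemicontinuous F"
    and sol: "F xdag = y"
    and r: "r > norm (xdag - xbar)"
    and deriv: "\<And>x. x \<in> cball xdag r \<Longrightarrow> (F has_derivative blinfun_apply (F' x)) (at x)"
    and dcont: "continuous_on (cball xdag r) F'"
    and k0: "k0 > 0"
    and tc: "\<And>xt x v. xt \<in> cball xdag r \<Longrightarrow> x \<in> cball xdag r \<Longrightarrow>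
               \<exists>g. (F' xt - F' x) v = F' x g \<and> norm g \<le> k0 * norm (xt - x) * norm v"
    and small: "k0 * norm (xdag - xbar) < 2"
  shows "\<forall>\<alpha>>0. \<forall>xa. F xa + \<alpha> *\<^sub>R (xa - xbar) = y \<longrightarrow>
           (let A = F' xdag;
                BA = \<alpha> * norm (inv (\<lambda>u. A u + \<alpha> *\<^sub>R u) (xdag - xbar));
                C = (2 + 2 * k0 * norm (xdag - xbar)) / (2 - k0 * norm (xdag - xbar))
            in norm (xa - xdag) \<le> norm (xdag - xbar)
             \<and> norm (xa - xdag) \<le> C * BA
             \<and> (\<forall>\<delta> yd xd. \<delta> \<ge> 0 \<longrightarrow> norm (y - yd) \<le> \<delta> \<longrightarrow>
                    F xd + \<alpha> *\<^sub>R (xd - xbar) = yd \<longrightarrow>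
                    norm (xd - xdag) \<le> C * BA + \<delta> / \<alpha>))"
  using tikhonov_error_estimates[OF mono _ less_imp_le[OF k0] _ less_imp_le[OF r] deriv tc small]
  unfolding Let_def sol[symmetric] by blast

end
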